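(* Let $q$ be a prime power, $5\le n\le q$, $\alpha_1,\dots,\alpha_n\in\mathbb{F}_q$ distinct, $u_1,\dots,u_n\in\mathbb{F}_q^*$, and $H\in\mathbb{F}_q^{4\times n}$ with $H_{ab}=u_b\alpha_b^{a-1}$ (so $\ker H$ has distance $5$). Then the number of $e\in\mathbb{F}_q^n$ with $|e|=3$ for which there exists $e'\in\mathbb{F}_q^n$ with $|e'|\le 2$ and $He'=He$ is at most $$\frac{(n-3)(n-4)}{2(q-1)^2}\cdot(q-1)^3\binom{n}{3}.$$
   Context: $|e|$ denotes the Hamming weight of $e\in\mathbb{F}_q^n$. *)

theory Defs
  imports Complex_Main "HOL-Library.Cardinality"
begin

text \<open>Vectors of F_q^n are functions nat => 'a supported on {0..<n}
  (coordinates indexed 0..n-1).\<close>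
definition vecs :: "nat \<Rightarrow> (nat \<Rightarrow> 'a::zero) set" where
  "vecs n = {e. \<forall>i. n \<le> i \<longrightarrow> e i = 0}"

definition hweight :: "nat \<Rightarrow> (nat \<Rightarrow> 'a::zero) \<Rightarrow> nat" where
  "hweight n e = card {i. i < n \<and> e i \<noteq> 0}"

definition matvec :: "nat \<Rightarrow> nat \<Rightarrow> (nat \<Rightarrow> nat \<Rightarrow> 'a::comm_semiring_1) \<Rightarrow> (nat \<Rightarrow> 'a) \<Rightarrow> (nat \<Rightarrow> 'a)" where
  "matvec m n H e = (\<lambda>a. if a < m then (\<Sum>b<n. H a b * e b) else 0)"

end

theory Submission
  imports Defs "HOL-Computational_Algebra.Polynomial"
begin

text \<open>If a weight-3 error \<open>e\<close> and an error \<open>e'\<close> of weight at most 2 have the same syndrome,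
  then \<open>e - e'\<close> is a nonzero codeword. Any \<open>k \<le> 4\<close> columns of \<open>H\<close> are independent
  (a polynomial of degree \<open>< 4\<close> vanishing at \<open>k - 1\<close> of the nodes but not at the \<open>k\<close>-th one
  gives a row combination detecting the \<open>k\<close>-th coordinate), so the codeword has weight exactly 5:
  \<open>e\<close> and \<open>e'\<close> have disjoint supports \<open>S\<close> and \<open>T\<close> of sizes 3 and 2. The codewords supported
  on the 5-set \<open>S \<union> T\<close> form a line, so \<open>e\<close>, being the restriction to \<open>S\<close> of a nonzero one,
  takes at most \<open>q - 1\<close> values for each of the \<open>C(n,3) C(n-3,2)\<close> choices of \<open>(S, T)\<close>.\<close>

lemma matvec_diff:
  fixes H :: "nat \<Rightarrow> nat \<Rightarrow> 'a::comm_ring_1"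
  shows "matvec m n H (\<lambda>i. v i - w i) = (\<lambda>a. matvec m n H v a - matvec m n H w a)"
  by (auto simp: matvec_def algebra_simps sum_subtractf)

lemma matvec_scale: "matvec m n H (\<lambda>i. c * v i) = (\<lambda>a. c * matvec m n H v a)"
  by (auto simp: matvec_def algebra_simps sum_distrib_left)

lemma poly_eq_sum_lessThan:
  fixes p :: "'a::comm_semiring_1 poly"
  assumes "degree p < m"
  shows "poly p x = (\<Sum>a<m. coeff p a * x ^ a)"
proof -
  have "poly p x = (\<Sum>a\<le>degree p. coeff p a * x ^ a)" by (rule poly_altdef)
  also have "\<dots> = (\<Sum>a<m. coeff p a * x ^ a)"
    by (rule sum.mono_neutral_left) (use assms in \<open>auto simp: coeff_eq_0\<close>)
  finally show ?thesis .
qed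

lemma two_mult_choose_two: "2 * (k choose 2) = k * (k - 1)"
  unfolding choose_two by (intro dvd_mult_div_cancel) auto

definition support :: "nat \<Rightarrow> (nat \<Rightarrow> 'a::zero) \<Rightarrow> nat set" where
  "support n v = {i. i < n \<and> v i \<noteq> 0}"

lemma hweight_eq_card_support: "hweight n v = card (support n v)"
  by (simp add: hweight_def support_def)

lemma finite_support [simp]: "finite (support n v)"
  by (simp add: support_def)

lemma support_subset: "support n v \<subseteq> {..<n}"
  by (auto simp: support_def)

lemma vecs_zero_outside_support: "v \<in> vecs n \<Longrightarrow> i \<notin> support n v \<Longrightarrow> v i = 0"
  by (auto simp: vecs_def support_def not_less)

locale generalized_vandermonde =
  fixes alpha u :: "nat \<Rightarrow> 'a::field" and n :: nat and H :: "nat \<Rightarrow> nat \<Rightarrow> 'a"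
  assumes distinct_nodes: "inj_on alpha {0..<n}"
    and nonzero_multipliers: "\<And>b. b < n \<Longrightarrow> u b \<noteq> 0"
    and matrix_entry: "\<And>a b. H a b = u b * alpha b ^ a"
begin

definition codewords_on :: "nat \<Rightarrow> nat set \<Rightarrow> (nat \<Rightarrow> 'a) set" where
  "codewords_on m P = {v. (\<forall>i. i \<notin> P \<longrightarrow> v i = 0) \<and> matvec m n H v = (\<lambda>_. 0)}"

lemma row_combination_eq_sum_poly:
  assumes "degree p < m"
  shows "(\<Sum>a<m. coeff p a * matvec m n H v a) = (\<Sum>b<n. u b * v b * poly p (alpha b))"
  by (simp add: matvec_def matrix_entry poly_eq_sum_lessThan[OF assms] sum_distrib_left
      sum_distrib_right sum.swap[of _ "{..<n}"] mult_ac)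

lemma codeword_supported_small_eq_0:
  assumes P: "P \<subseteq> {..<n}" "card P \<le> m" and v: "v \<in> codewords_on m P"
  shows "v = (\<lambda>_. 0)"
proof
  fix j
  have supp: "\<And>i. i \<notin> P \<Longrightarrow> v i = 0" and ker: "matvec m n H v = (\<lambda>_. 0)"
    using v by (auto simp: codewords_on_def)
  show "v j = 0"
  proof (cases "j \<in> P")
    case False
    then show ?thesis by (rule supp)
  next
    case True
    have fin: "finite P" using P finite_subset by blast
    define p where "p = (\<Prod>b\<in>P - {j}. [:- alpha b, 1:])"
    have poly_p: "poly p x = (\<Prod>c\<in>P - {j}. x - alpha c)" for x
      by (simp add: p_def poly_prod)
    have "degree p \<le> card (P - {j})"
      unfolding p_def using degree_prod_sum_le[of "P - {j}" "\<lambda>b. [:- alpha b, 1:]"] fin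
      by (simp add: o_def)
    also have "\<dots> < m" using P(2) card_Diff1_less[OF fin True] by linarith
    finally have "degree p < m" .
    from row_combination_eq_sum_poly[OF this, of v]
    have "0 = (\<Sum>b<n. u b * v b * poly p (alpha b))" by (simp add: ker)
    also have "\<dots> = (\<Sum>b\<in>{j}. u b * v b * poly p (alpha b))"
      by (rule sum.mono_neutral_right) (use P True supp fin in \<open>auto simp: poly_p\<close>)
    finally have "u j * v j * poly p (alpha j) = 0" by simp
    moreover have "poly p (alpha j) \<noteq> 0"
      using distinct_nodes P True fin unfolding poly_p inj_on_def by fastforce
    moreover have "u j \<noteq> 0" using nonzero_multipliers P True by auto
    ultimately show ?thesis by simp
  qed
qed

lemma codewords_on_collinear:
  assumes P: "P \<subseteq> {..<n}" "card P \<le> Suc m"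
    and v: "v \<in> codewords_on m P" "v \<noteq> (\<lambda>_. 0)" and w: "w \<in> codewords_on m P"
  obtains c where "w = (\<lambda>i. c * v i)"
proof -
  obtain j where j: "v j \<noteq> 0" using v(2) by auto
  then have "j \<in> P" using v(1) by (auto simp: codewords_on_def)
  define c where "c = w j / v j"
  have "matvec m n H (\<lambda>i. w i - c * v i) = (\<lambda>_. 0)"
    using v(1) w by (simp add: codewords_on_def matvec_diff matvec_scale)
  moreover have "w i - c * v i = 0" if "i \<notin> P - {j}" for i
    using v(1) w j that by (auto simp: codewords_on_def c_def)
  ultimately have "(\<lambda>i. w i - c * v i) \<in> codewords_on m (P - {j})"
    by (simp add: codewords_on_def)
  moreover have "card (P - {j}) \<le> m"
    using P \<open>j \<in> P\<close> finite_subset by fastforce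
  ultimately have "(\<lambda>i. w i - c * v i) = (\<lambda>_. 0)"
    using P by (intro codeword_supported_small_eq_0) auto
  then have "w = (\<lambda>i. c * v i)" by (simp add: fun_eq_iff)
  then show thesis by (rule that)
qed

lemma card_nonzero_codewords_on:
  assumes fin: "finite (UNIV :: 'a set)" and P: "P \<subseteq> {..<n}" "card P \<le> Suc m"
  shows "finite (codewords_on m P - {\<lambda>_. 0})"
    and "card (codewords_on m P - {\<lambda>_. 0}) \<le> CARD('a) - 1"
proof -
  have "\<exists>v. codewords_on m P - {\<lambda>_. 0} \<subseteq> (\<lambda>c i. c * v i) ` (UNIV - {0})"
  proof (cases "codewords_on m P - {\<lambda>_. 0} = {}")
    case False
    then obtain v where v: "v \<in> codewords_on m P" "v \<noteq> (\<lambda>_. 0)" by auto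
    have "w \<in> (\<lambda>c i. c * v i) ` (UNIV - {0})" if "w \<in> codewords_on m P - {\<lambda>_. 0}" for w
    proof -
      have "w \<in> codewords_on m P" using that by blast
      then obtain c where c: "w = (\<lambda>i. c * v i)" by (rule codewords_on_collinear[OF P v])
      then have "c \<noteq> 0" using that by auto
      with c show ?thesis by blast
    qed
    then show ?thesis by blast
  qed blast
  then obtain v where sub: "codewords_on m P - {\<lambda>_. 0} \<subseteq> (\<lambda>c i. c * v i) ` (UNIV - {0})" ..
  have fin_image: "finite ((\<lambda>c i. c * v i) ` (UNIV - {0::'a}))" using fin by simp
  show "finite (codewords_on m P - {\<lambda>_. 0})" using sub fin_image by (rule finite_subset)
  have "card (codewords_on m P - {\<lambda>_. 0}) \<le> card ((\<lambda>c i. c * v i) ` (UNIV - {0::'a}))"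
    using fin_image sub by (rule card_mono)
  also have "\<dots> \<le> card (UNIV - {0::'a})" using fin by (intro card_image_le) simp
  also have "\<dots> = CARD('a) - 1" by (simp add: card_Diff_singleton)
  finally show "card (codewords_on m P - {\<lambda>_. 0}) \<le> CARD('a) - 1" .
qed

lemma confusable_error_decomposition:
  assumes e: "e \<in> vecs n" "hweight n e = s" and e': "e' \<in> vecs n" "hweight n e' \<le> m + 1 - s"
    and same_syndrome: "matvec m n H e' = matvec m n H e" and s: "m + 1 < 2 * s"
  obtains T v where "T \<subseteq> {..<n} - support n e" "card T = m + 1 - s"
    and "v \<in> codewords_on m (support n e \<union> T) - {\<lambda>_. 0}"
    and "e = (\<lambda>i. if i \<in> support n e then v i else 0)"
proof -
  let ?S = "support n e" and ?T = "support n e'"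
  define v where "v = (\<lambda>i. e i - e' i)"
  have codeword: "v \<in> codewords_on m (?S \<union> ?T)"
    using e(1) e'(1) same_syndrome
    by (auto simp: codewords_on_def v_def matvec_diff vecs_zero_outside_support)
  moreover have nonzero: "v \<noteq> (\<lambda>_. 0)"
  proof
    assume "v = (\<lambda>_. 0)"
    then have "e = e'" by (simp add: v_def fun_eq_iff)
    with e(2) e'(2) s show False by simp
  qed
  ultimately have "m < card (?S \<union> ?T)"
    using codeword_supported_small_eq_0[of "?S \<union> ?T" m v] support_subset by fastforce
  moreover have "card (?S \<union> ?T) + card (?S \<inter> ?T) = s + card ?T"
    using card_Un_Int[of ?S ?T] e(2) by (simp add: hweight_eq_card_support)
  moreover have "card (?S \<inter> ?T) \<le> card ?T" by (simp add: card_mono)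
  moreover note e'(2)[unfolded hweight_eq_card_support]
  ultimately have "card (?S \<inter> ?T) = 0" and card_T: "card ?T = m + 1 - s"
    by linarith+
  then have disjoint: "?S \<inter> ?T = {}" by simp
  show thesis
  proof
    show "?T \<subseteq> {..<n} - ?S" using disjoint support_subset by blast
    show "card ?T = m + 1 - s" by (fact card_T)
    show "v \<in> codewords_on m (?S \<union> ?T) - {\<lambda>_. 0}" using codeword nonzero by simp
    have "e' i = 0" if "i \<in> ?S" for i
      using that disjoint by (blast intro: vecs_zero_outside_support[OF e'(1)])
    then show "e = (\<lambda>i. if i \<in> ?S then v i else 0)"
      using vecs_zero_outside_support[OF e(1)] by (auto simp: v_def fun_eq_iff)
  qed
qed

lemma card_confusable_errors_le:
  assumes fin: "finite (UNIV :: 'a set)" and s: "m + 1 < 2 * s" "s \<le> m + 1"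
  shows "card {e \<in> vecs n. hweight n e = s \<and>
           (\<exists>e' \<in> vecs n. hweight n e' \<le> m + 1 - s \<and> matvec m n H e' = matvec m n H e)}
         \<le> (n choose s) * ((n - s) choose (m + 1 - s)) * (CARD('a) - 1)"
    (is "card ?E \<le> _")
proof -
  define t where "t = m + 1 - s"
  define supports where "supports = {S. S \<subseteq> {..<n} \<and> card S = s}"
  define extensions where "extensions S = {T. T \<subseteq> {..<n} - S \<and> card T = t}" for S
  define restrictions where "restrictions S T =
    (\<lambda>v i. if i \<in> S then v i else 0) ` (codewords_on m (S \<union> T) - {\<lambda>_. 0})" for S T
  have cover: "?E \<subseteq> (\<Union>S\<in>supports. \<Union>T\<in>extensions S. restrictions S T)"
  proof
    fix e assume "e \<in> ?E"
    then obtain e' where e: "e \<in> vecs n" "hweight n e = s"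
      and e': "e' \<in> vecs n" "hweight n e' \<le> m + 1 - s"
      and same_syndrome: "matvec m n H e' = matvec m n H e" by blast
    obtain T v where "T \<subseteq> {..<n} - support n e" "card T = m + 1 - s"
      and "v \<in> codewords_on m (support n e \<union> T) - {\<lambda>_. 0}"
      and "e = (\<lambda>i. if i \<in> support n e then v i else 0)"
      by (rule confusable_error_decomposition[OF e e' same_syndrome s(1)])
    moreover have "support n e \<in> supports"
      using e(2) support_subset by (simp add: supports_def hweight_eq_card_support)
    ultimately show "e \<in> (\<Union>S\<in>supports. \<Union>T\<in>extensions S. restrictions S T)"
      unfolding extensions_def restrictions_def t_def by blast
  qed
  have restrictions: "finite (restrictions S T) \<and> card (restrictions S T) \<le> CARD('a) - 1"
    if "S \<in> supports" "T \<in> extensions S" for S T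
  proof -
    have "S \<union> T \<subseteq> {..<n}" and "card (S \<union> T) \<le> Suc m"
      using that s(2) card_Un_le[of S T] by (auto simp: supports_def extensions_def t_def)
    from card_nonzero_codewords_on[OF fin this] show ?thesis
      unfolding restrictions_def by (meson card_image_le finite_imageI le_trans)
  qed
  have finite_supports: "finite supports"
    by (rule finite_subset[of _ "Pow {..<n}"]) (auto simp: supports_def)
  have finite_extensions: "finite (extensions S)" for S
    by (rule finite_subset[of _ "Pow {..<n}"]) (auto simp: extensions_def)
  have card_extensions: "card (extensions S) = (n - s) choose t" if "S \<in> supports" for S
  proof -
    have "card ({..<n} - S) = n - s"
      using that by (auto simp: supports_def card_Diff_subset finite_subset)
    then show ?thesis unfolding extensions_def using n_subsets[of "{..<n} - S" t] by simp
  qed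
  have "card ?E \<le> card (\<Union>S\<in>supports. \<Union>T\<in>extensions S. restrictions S T)"
    using finite_supports finite_extensions restrictions cover by (intro card_mono) auto
  also have "\<dots> \<le> (\<Sum>S\<in>supports. card (\<Union>T\<in>extensions S. restrictions S T))"
    by (rule card_UN_le[OF finite_supports])
  also have "\<dots> \<le> (\<Sum>S\<in>supports. \<Sum>T\<in>extensions S. card (restrictions S T))"
    by (intro sum_mono card_UN_le finite_extensions)
  also have "\<dots> \<le> (\<Sum>S\<in>supports. \<Sum>T\<in>extensions S. CARD('a) - 1)"
    using restrictions by (intro sum_mono) blast
  also have "\<dots> = (\<Sum>S\<in>supports. ((n - s) choose t) * (CARD('a) - 1))"
    by (simp add: card_extensions)
  also have "\<dots> = (n choose s) * ((n - s) choose t) * (CARD('a) - 1)"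
    using n_subsets[of "{..<n}" s] by (simp add: supports_def)
  finally show ?thesis unfolding t_def .
qed

end

theorem mainTheorem10:
  fixes alpha u :: "nat \<Rightarrow> 'a::{finite,field}" and n :: nat
    and H :: "nat \<Rightarrow> nat \<Rightarrow> 'a"
  assumes "5 \<le> n" and "n \<le> CARD('a)"
    and "inj_on alpha {0..<n}"
    and "\<forall>b<n. u b \<noteq> 0"
    and "\<forall>a b. H a b = u b * alpha b ^ a"
  shows "real (card {e \<in> vecs n. hweight n e = 3 \<and>
            (\<exists>e' \<in> vecs n. hweight n e' \<le> 2 \<and> matvec 4 n H e' = matvec 4 n H e)})
         \<le> real ((n - 3) * (n - 4)) / (2 * (real (CARD('a)) - 1)^2)
            * (real (CARD('a)) - 1)^3 * real (n choose 3)"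
proof -
  interpret generalized_vandermonde alpha u n H
    using assms(3-5) by unfold_locales auto
  have "real CARD('a) - 1 \<noteq> 0" using assms(1,2) by simp
  moreover have "real ((n - 3) * (n - 4)) = 2 * real ((n - 3) choose 2)"
    using two_mult_choose_two[of "n - 3"] by (simp add: numeral_eq_Suc flip: of_nat_mult)
  ultimately have rhs: "real ((n - 3) * (n - 4)) / (2 * (real CARD('a) - 1)^2)
      * (real CARD('a) - 1)^3 * real (n choose 3)
    = real ((n choose 3) * ((n - 3) choose 2) * (CARD('a) - 1))"
    by (simp add: of_nat_diff power2_eq_square power3_eq_cube)
  show ?thesis
    unfolding rhs of_nat_le_iff using card_confusable_errors_le[of 4 3] by simp
qed

end
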